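(* In the setting below, $\mathbb E\,S(\widetilde a)\le(8+16C_G)\,\mathbb E\,S(a)$.
   Context: Let $n,N\in\mathbb N$, $I=\{1,\dots,n\}$, $J=\{1,\dots,N\}$, $G$ a nonempty finite set of maps $I\to J$, $\mathbb P$ the normalized counting measure on $G$ ($\mathbb P(E)=|E|/|G|$) and $\mathbb E$ its expectation. Assume there is a constant $C_G\ge1$ such that for all $i\in I,j\in J$, $\mathbb P(g(i)=j)=1/N$, and for all pairs $(i_1,j_1)\ne(i_2,j_2)$ in $I\times J$, $\mathbb P(g(i_1)=j_1,g(i_2)=j_2)\le C_G/N^2$. Fix an integer $1\le\ell\le n$ and a matrix $a\in\mathbb R^{n\times N}$ with non-negative entries, and let $h:\{1,\dots,nN\}\to I\times J$ be a bijection with $a(h(j))\ge a(h(j+1))$ for $1\le j<\ell N$ and $a(h(j))=0$ for $\ell N<j\le nN$ (for a matrix $b$, $b(i,j)=b_{ij}$). For such $a$, let $\widetilde a$ be the matrix with $\widetilde a(h(j))=\big(\frac1{\ell N}\sum_{i=1}^{\ell N}a(h(i))\big)\mathbb 1_{\{1,\dots,\ell N\}}(j)$ for $1\le j\le nN$. For a non-negative matrix $b$ and $g\in G$ let $S(b)(g)=\sum_{k=1}^{\ell}S_k(b)(g)$, where $S_k(b)(g)$ is the $k$-th largest (with multiplicity) of the numbers $b_{1g(1)},\dots,b_{ng(n)}$. *)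

theory Defs
  imports "HOL-Analysis.Analysis" "HOL-Library.FuncSet"
begin

text \<open>Maps I \<rightarrow> J with I = {1..n}, J = {1..N} are represented as extensional
functions nat \<Rightarrow> nat (value undefined outside {1..n}).\<close>

definition prob_G :: "(nat \<Rightarrow> nat) set \<Rightarrow> ((nat \<Rightarrow> nat) \<Rightarrow> bool) \<Rightarrow> real" where
  "prob_G G E = real (card {g \<in> G. E g}) / real (card G)"

definition expect_G :: "(nat \<Rightarrow> nat) set \<Rightarrow> ((nat \<Rightarrow> nat) \<Rightarrow> real) \<Rightarrow> real" where
  "expect_G G X = (\<Sum>g\<in>G. X g) / real (card G)"

text \<open>The values b_{1 g(1)}, ..., b_{n g(n)} sorted in non-increasing order
(with multiplicity); the k-th entry (k starting from 1) is S_k(b)(g).\<close>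
definition sorted_vals :: "nat \<Rightarrow> (nat \<Rightarrow> nat \<Rightarrow> real) \<Rightarrow> (nat \<Rightarrow> nat) \<Rightarrow> real list" where
  "sorted_vals n b g = rev (sort (map (\<lambda>i. b i (g i)) [1..<n+1]))"

definition S_k :: "nat \<Rightarrow> nat \<Rightarrow> (nat \<Rightarrow> nat \<Rightarrow> real) \<Rightarrow> (nat \<Rightarrow> nat) \<Rightarrow> real" where
  "S_k n k b g = sorted_vals n b g ! (k - 1)"

definition S_top :: "nat \<Rightarrow> nat \<Rightarrow> (nat \<Rightarrow> nat \<Rightarrow> real) \<Rightarrow> (nat \<Rightarrow> nat) \<Rightarrow> real" where
  "S_top n l b g = (\<Sum>k=1..l. S_k n k b g)"

definition a_tilde :: "nat \<Rightarrow> nat \<Rightarrow> (nat \<Rightarrow> nat \<times> nat) \<Rightarrow> (nat \<Rightarrow> nat \<Rightarrow> real) \<Rightarrow> nat \<Rightarrow> nat \<Rightarrow> real" where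
  "a_tilde l N h a i j =
     (if (i, j) \<in> h ` {1..l*N}
      then (\<Sum>m=1..l*N. case_prod a (h m)) / real (l*N) else 0)"

end

theory Submission imports Defs begin

(* Let T be the sum of the l N largest entries a(h 1) >= ... >= a(h (l N)). Pointwise
   S(a_tilde) <= l T / (l N) = T / N, so it suffices to show E S(a) >= T / (N (1 + C)); this even
   gives the constant 1 + C. Write a(h m) = sum_{k >= m} d_k with d_k >= 0 and let X_k(g) count
   the cells h 1, ..., h k on the graph of g. The first l hit cells lie in distinct rows, so
   sum_k d_k min(l, X_k(g)) <= S(a)(g). The pair condition gives E X_k = k/N and
   E X_k^2 <= k/N + C (k/N)^2, and the minorant min(l, X) >= t X - t^2 X^2 / (4 l) with
   t = 2/(1 + C) turns these into E min(l, X_k) >= (k/N) / (1 + C); summing against d_k gives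
   back T / (N (1 + C)). The entries beyond position l N play no role. *)

lemma sum_mset_le_sum_take_sorted:
  fixes f :: "real list"
  assumes "sorted_wrt (\<ge>) f" "M \<subseteq># mset f"
  shows "sum_mset M \<le> sum_list (take (size M) f)"
  using assms
proof (induction f arbitrary: M)
  case Nil
  then show ?case by simp
next
  case (Cons x f)
  show ?case
  proof (cases "x \<in># M")
    case True
    then have M: "M = add_mset x (M - {#x#})" by simp
    have "M - {#x#} \<subseteq># mset f" using Cons.prems(2) M
      by (metis mset.simps(2) subset_mset.add_le_cancel_left mset_subset_eq_add_mset_cancel)
    then show ?thesis using Cons M by (metis add_le_cancel_left sum_mset.add_mset
        size_add_mset sorted_wrt.simps(2) take_Suc_Cons sum_list.Cons)
  next
    case False
    show ?thesis
    proof (cases "M = {#}")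
      case False
      then obtain y where y: "y \<in># M" by (meson multiset_nonemptyE)
      have Mf: "M \<subseteq># mset f" using Cons.prems(2) \<open>x \<notin># M\<close>
        by (simp add: inter_add_left1 subset_mset.inf.absorb_iff2)
      then have "M - {#y#} \<subseteq># mset f" by (meson diff_subset_eq_self subset_mset.trans)
      then have "sum_mset (M - {#y#}) \<le> sum_list (take (size (M - {#y#})) f)"
        using Cons by simp
      moreover have "y \<le> x" using y Mf Cons.prems(1)
        by (metis mset_subset_eqD set_mset_mset sorted_wrt.simps(2))
      moreover have "M = add_mset y (M - {#y#})" using y by simp
      ultimately show ?thesis by (metis add_mono size_add_mset sum_mset.add_mset
          take_Suc_Cons sum_list.Cons)
    qed simp
  qed
qed

lemma S_top_eq_sum_take:
  assumes "l \<le> n"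
  shows "S_top n l b g = sum_list (take l (sorted_vals n b g))"
proof -
  have len: "length (sorted_vals n b g) = n" by (simp add: sorted_vals_def)
  have "S_top n l b g = (\<Sum>k<l. sorted_vals n b g ! k)"
    by (simp add: S_top_def S_k_def sum.atLeast1_atMost_eq)
  also have "\<dots> = sum_list (take l (sorted_vals n b g))"
    using assms len by (simp add: sum_list_sum_nth min_def atLeast0LessThan)
  finally show ?thesis .
qed

lemma mset_sorted_vals: "mset (sorted_vals n b g) = image_mset (\<lambda>i. b i (g i)) (mset_set {1..n})"
proof -
  have "{1..<n+1} = {1..n}" by auto
  then show ?thesis by (simp only: sorted_vals_def mset_rev mset_sort mset_map mset_upt)
qed

lemma set_sorted_vals: "set (sorted_vals n b g) = (\<lambda>i. b i (g i)) ` {1..n}"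
  by (auto simp: sorted_vals_def)

lemma sum_le_S_top:
  assumes "P \<subseteq> {1..n}" "card P \<le> l" "l \<le> n"
    and nonneg: "\<And>i. i \<in> {1..n} \<Longrightarrow> b i (g i) \<ge> 0"
  shows "(\<Sum>i\<in>P. b i (g i)) \<le> S_top n l b g"
proof -
  define f where "f = sorted_vals n b g"
  define M where "M = image_mset (\<lambda>i. b i (g i)) (mset_set P)"
  have "M \<subseteq># mset f"
    unfolding M_def f_def mset_sorted_vals
    by (intro image_mset_subseteq_mono subset_imp_msubset_mset_set) (use assms(1) in auto)
  moreover have "sorted_wrt (\<ge>) f" by (simp add: f_def sorted_vals_def sorted_wrt_rev)
  ultimately have "(\<Sum>i\<in>P. b i (g i)) \<le> sum_list (take (card P) f)"
    using sum_mset_le_sum_take_sorted by (fastforce simp: M_def sum_unfold_sum_mset)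
  also have "\<dots> \<le> sum_list (take (card P) f) + sum_list (drop (card P) (take l f))"
    using nonneg by (intro add_increasing2 sum_list_nonneg)
      (auto simp: f_def set_sorted_vals dest!: in_set_dropD in_set_takeD)
  also have "\<dots> = sum_list (take l f)"
    using assms(2) by (metis append_take_drop_id min.absorb1 sum_list_append take_take)
  finally show ?thesis using S_top_eq_sum_take[OF assms(3)] by (simp add: f_def)
qed

lemma S_top_le:
  assumes "l \<le> n" "\<And>i. i \<in> {1..n} \<Longrightarrow> b i (g i) \<le> A"
  shows "S_top n l b g \<le> real l * A"
proof -
  have "S_top n l b g \<le> (\<Sum>k=1..l. A)" unfolding S_top_def S_k_def
  proof (rule sum_mono)
    fix k assume "k \<in> {1..l}"
    then have "sorted_vals n b g ! (k-1) \<in> set (sorted_vals n b g)"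
      using assms(1) by (intro nth_mem) (auto simp: sorted_vals_def)
    then show "sorted_vals n b g ! (k-1) \<le> A" using assms(2) by (auto simp: set_sorted_vals)
  qed
  then show ?thesis by simp
qed

lemma expect_G_sum: "expect_G G (\<lambda>g. \<Sum>i\<in>I. f i g) = (\<Sum>i\<in>I. expect_G G (f i))"
  unfolding expect_G_def by (subst sum.swap) (simp add: sum_divide_distrib)

lemma expect_G_diff: "expect_G G (\<lambda>g. X g - Y g) = expect_G G X - expect_G G Y"
  by (simp add: expect_G_def sum_subtractf diff_divide_distrib)

lemma expect_G_cmult: "expect_G G (\<lambda>g. c * X g) = c * expect_G G X"
  by (simp add: expect_G_def sum_distrib_left)

lemma expect_G_mono: "(\<And>g. g \<in> G \<Longrightarrow> X g \<le> Y g) \<Longrightarrow> expect_G G X \<le> expect_G G Y"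
  unfolding expect_G_def by (intro divide_right_mono sum_mono) auto

lemma expect_G_const: "finite G \<Longrightarrow> G \<noteq> {} \<Longrightarrow> expect_G G (\<lambda>_. c) = c"
  by (simp add: expect_G_def)

lemma expect_G_of_bool: "finite G \<Longrightarrow> expect_G G (\<lambda>g. of_bool (P g)) = prob_G G P"
  by (simp add: expect_G_def prob_G_def Int_def)

lemma min_ge_linear_minus_quadratic:
  fixes X L t :: real
  assumes "X \<ge> 0" "L > 0" "0 \<le> t" "t \<le> 1"
  shows "t * X - t^2 * X^2 / (4 * L) \<le> min L X"
proof -
  have "t * X - t^2 * X^2 / (4 * L) = L - (t * X - 2 * L)^2 / (4 * L)"
    using assms by (simp add: field_simps power2_eq_square)
  also have "\<dots> \<le> L" using assms by simp
  finally have "t * X - t^2 * X^2 / (4 * L) \<le> L" .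
  moreover have "t * X \<le> X" "0 \<le> t^2 * X^2 / (4 * L)"
    using assms by (simp_all add: mult_left_le_one_le)
  ultimately show ?thesis by linarith
qed

lemma expect_G_min_ge:
  fixes X :: "(nat \<Rightarrow> nat) \<Rightarrow> real" and L C u :: real
  assumes "L \<ge> 1" "C \<ge> 1" "0 \<le> u" "u \<le> L"
    and X_nonneg: "\<And>g. g \<in> G \<Longrightarrow> X g \<ge> 0"
    and mean: "expect_G G X = u"
    and second: "expect_G G (\<lambda>g. (X g)^2) \<le> u + C * u^2"
  shows "u / (1 + C) \<le> expect_G G (\<lambda>g. min L (X g))"
proof -
  define t where "t = 2 / (1 + C)"
  have t: "0 \<le> t" "t \<le> 1" using assms(2) by (auto simp: t_def)
  have "t^2 / (4 * L) * (u + C * u^2) \<le> t^2 / (4 * L) * (L * (1 + C) * u)"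
  proof (intro mult_left_mono)
    have "u \<le> L * u" using mult_right_mono[of 1 L u] assms by simp
    moreover have "C * u^2 \<le> C * (L * u)"
      using assms by (intro mult_left_mono) (auto simp: power2_eq_square mult_right_mono)
    ultimately show "u + C * u^2 \<le> L * (1 + C) * u" by (simp add: algebra_simps)
  qed (use assms(1) in simp)
  also have "\<dots> = t * u - u / (1 + C)"
  proof -
    have "L \<noteq> 0" "1 + C \<noteq> 0" using assms(1,2) by auto
    then show ?thesis unfolding t_def by (simp add: power2_eq_square divide_simps; simp add: algebra_simps)
  qed
  finally have "u / (1 + C) \<le> t * u - t^2 / (4 * L) * (u + C * u^2)" by linarith
  also have "\<dots> \<le> t * expect_G G X - t^2 / (4 * L) * expect_G G (\<lambda>g. (X g)^2)"
    using mean mult_left_mono[OF second, of "t^2 / (4 * L)"] assms(1) by simp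
  also have "\<dots> = expect_G G (\<lambda>g. t * X g - t^2 / (4 * L) * (X g)^2)"
    by (simp only: expect_G_diff expect_G_cmult)
  also have "\<dots> \<le> expect_G G (\<lambda>g. min L (X g))"
    using min_ge_linear_minus_quadratic[OF X_nonneg _ t] assms(1) by (intro expect_G_mono) simp
  finally show ?thesis .
qed

lemma sum_eq_sum_decrements_card:
  fixes x :: "nat \<Rightarrow> real"
  assumes "Q \<subseteq> {1..K}" "x (Suc K) = 0"
  shows "(\<Sum>m\<in>Q. x m) = (\<Sum>k=1..K. (x k - x (Suc k)) * real (card {m\<in>Q. m \<le> k}))"
proof -
  have telescope: "x m = (\<Sum>k\<in>{1..K}. (x k - x (Suc k)) * of_bool (m \<le> k))" if "m \<in> Q" for m
  proof -
    have "{1..K} \<inter> {k. m \<le> k} = {m..K}" using that assms(1) by auto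
    then have "(\<Sum>k\<in>{1..K}. (x k - x (Suc k)) * of_bool (m \<le> k)) = - (\<Sum>k=m..K. x (Suc k) - x k)"
      by (simp add: sum_negf[symmetric])
    also have "\<dots> = x m" using that assms by (subst sum_Suc_diff) auto
    finally show ?thesis by simp
  qed
  have "(\<Sum>m\<in>Q. x m) = (\<Sum>k\<in>{1..K}. \<Sum>m\<in>Q. (x k - x (Suc k)) * of_bool (m \<le> k))"
    using telescope by (subst sum.swap) simp
  also have "\<dots> = (\<Sum>k=1..K. (x k - x (Suc k)) * real (card {m\<in>Q. m \<le> k}))"
    using finite_subset[OF assms(1)] by (simp add: sum_distrib_left[symmetric] Int_def)
  finally show ?thesis .
qed

lemma sum_eq_sum_decrements_mult:
  fixes x :: "nat \<Rightarrow> real"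
  assumes "x (Suc K) = 0"
  shows "(\<Sum>m=1..K. x m) = (\<Sum>k=1..K. (x k - x (Suc k)) * real k)"
proof -
  have "(\<Sum>m=1..K. x m) = (\<Sum>k=1..K. (x k - x (Suc k)) * real (card {m\<in>{1..K}. m \<le> k}))"
    using assms by (intro sum_eq_sum_decrements_card) auto
  also have "\<dots> = (\<Sum>k=1..K. (x k - x (Suc k)) * real k)"
  proof (rule sum.cong[OF refl])
    fix k assume "k \<in> {1..K}"
    then have "{m\<in>{1..K}. m \<le> k} = {1..k}" by auto
    then show "(x k - x (Suc k)) * real (card {m\<in>{1..K}. m \<le> k}) = (x k - x (Suc k)) * real k"
      by simp
  qed
  finally show ?thesis .
qed

lemma obtain_initial_segment:
  fixes H :: "nat set"
  assumes "finite H"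
  obtains Q where "Q \<subseteq> H" "card Q \<le> l"
    "\<And>k. min l (card {m\<in>H. m \<le> k}) \<le> card {m\<in>Q. m \<le> k}"
proof -
  define B where "B = Suc (Max (insert 0 H))"
  have H_below: "m < B" if "m \<in> H" for m
    using that assms by (simp add: B_def le_imp_less_Suc)
  define R where "R = {r. r \<le> B \<and> card {m\<in>H. m < r} \<le> l}"
  define r where "r = Max R"
  have "0 \<in> R" "finite R" by (auto simp: R_def)
  then have r: "r \<in> R" and r_max: "\<And>r'. r' \<in> R \<Longrightarrow> r' \<le> r"
    by (auto simp: r_def intro: Max_in)
  define Q where "Q = {m\<in>H. m < r}"
  have fin_Q: "finite Q" using assms by (simp add: Q_def)
  have "min l (card {m\<in>H. m \<le> k}) \<le> card {m\<in>Q. m \<le> k}" for k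
  proof (cases "k < r")
    case True
    then have "{m\<in>Q. m \<le> k} = {m\<in>H. m \<le> k}" by (auto simp: Q_def)
    then show ?thesis by simp
  next
    case False
    then have Q_k: "{m\<in>Q. m \<le> k} = Q" by (auto simp: Q_def)
    show ?thesis
    proof (cases "r = B")
      case True
      then have "{m\<in>H. m \<le> k} \<subseteq> Q" using H_below by (auto simp: Q_def)
      then show ?thesis using Q_k fin_Q by (simp add: card_mono min.coboundedI2)
    next
      case False
      then have "Suc r \<le> B" using r by (simp add: R_def)
      moreover have "Suc r \<notin> R" using r_max by fastforce
      ultimately have "l < card {m\<in>H. m < Suc r}" by (simp add: R_def)
      also have "\<dots> \<le> card (insert r Q)"
        using fin_Q by (intro card_mono) (auto simp: Q_def)
      also have "\<dots> \<le> Suc (card Q)" by (simp add: card_insert_le_m1)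
      finally show ?thesis using Q_k by simp
    qed
  qed
  moreover have "card Q \<le> l" using r by (simp add: R_def Q_def)
  moreover have "Q \<subseteq> H" by (simp add: Q_def)
  ultimately show ?thesis using that by blast
qed

definition hits :: "(nat \<Rightarrow> nat) \<Rightarrow> (nat \<times> nat) set \<Rightarrow> nat" where
  "hits g E = card {c \<in> E. g (fst c) = snd c}"

lemma hits_image:
  assumes "inj_on h M"
  shows "hits g (h ` M) = card {m \<in> M. g (fst (h m)) = snd (h m)}"
proof -
  have "{c \<in> h ` M. g (fst c) = snd c} = h ` {m \<in> M. g (fst (h m)) = snd (h m)}" by auto
  then show ?thesis
    using assms by (simp add: hits_def card_image inj_on_subset[of h M])
qed

lemma real_hits_eq_sum: "finite E \<Longrightarrow> real (hits g E) = (\<Sum>c\<in>E. of_bool (g (fst c) = snd c))"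
  by (simp add: hits_def Int_def)

lemma sum_graph_cells_le_S_top:
  fixes a :: "nat \<Rightarrow> nat \<Rightarrow> real"
  assumes "l \<le> n" "E \<subseteq> {1..n} \<times> {1..N}" "card E \<le> l"
    and on_graph: "\<And>c. c \<in> E \<Longrightarrow> g (fst c) = snd c"
    and g_maps: "\<And>i. i \<in> {1..n} \<Longrightarrow> g i \<in> {1..N}"
    and a_nonneg: "\<And>i j. i \<in> {1..n} \<Longrightarrow> j \<in> {1..N} \<Longrightarrow> a i j \<ge> 0"
  shows "(\<Sum>c\<in>E. case_prod a c) \<le> S_top n l a g"
proof -
  have "inj_on fst E"
    using on_graph by (intro inj_onI) (metis prod.collapse)
  then have "(\<Sum>c\<in>E. case_prod a c) = (\<Sum>i\<in>fst ` E. a i (g i))"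
    using on_graph by (simp add: sum.reindex case_prod_beta)
  also have "\<dots> \<le> S_top n l a g"
  proof (rule sum_le_S_top[OF _ _ assms(1)])
    show "fst ` E \<subseteq> {1..n}" using assms(2) by auto
    show "card (fst ` E) \<le> l" using assms(3) card_image_le[of E fst] finite_subset[OF assms(2)]
      by simp
    show "\<And>i. i \<in> {1..n} \<Longrightarrow> 0 \<le> a i (g i)" using g_maps a_nonneg by blast
  qed
  finally show ?thesis .
qed

lemma S_top_ge_sum_min_hits:
  fixes x :: "nat \<Rightarrow> real" and a :: "nat \<Rightarrow> nat \<Rightarrow> real"
  assumes "l \<le> n" and h_inj: "inj_on h {1..K}" and h_cells: "h ` {1..K} \<subseteq> {1..n} \<times> {1..N}"
    and g_maps: "\<And>i. i \<in> {1..n} \<Longrightarrow> g i \<in> {1..N}"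
    and a_nonneg: "\<And>i j. i \<in> {1..n} \<Longrightarrow> j \<in> {1..N} \<Longrightarrow> a i j \<ge> 0"
    and x: "\<And>m. m \<in> {1..K} \<Longrightarrow> x m = case_prod a (h m)" "x (Suc K) = 0"
    and x_decr: "\<And>k. k \<in> {1..K} \<Longrightarrow> x (Suc k) \<le> x k"
  shows "(\<Sum>k=1..K. (x k - x (Suc k)) * min (real l) (real (hits g (h ` {1..k})))) \<le> S_top n l a g"
proof -
  define H where "H = {m \<in> {1..K}. g (fst (h m)) = snd (h m)}"
  obtain Q where Q: "Q \<subseteq> H" "card Q \<le> l"
    and Q_counts: "\<And>k. min l (card {m\<in>H. m \<le> k}) \<le> card {m\<in>Q. m \<le> k}"
    using obtain_initial_segment[of H] by (auto simp: H_def)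
  have Q_sub: "Q \<subseteq> {1..K}" using Q(1) by (auto simp: H_def)
  have hits_eq: "hits g (h ` {1..k}) = card {m\<in>H. m \<le> k}" if "k \<in> {1..K}" for k
  proof -
    have "inj_on h {1..k}" using h_inj that by (auto intro: inj_on_subset)
    moreover have "{m \<in> {1..k}. g (fst (h m)) = snd (h m)} = {m\<in>H. m \<le> k}"
      using that by (auto simp: H_def)
    ultimately show ?thesis by (simp add: hits_image)
  qed
  have "(\<Sum>k=1..K. (x k - x (Suc k)) * min (real l) (real (hits g (h ` {1..k}))))
      \<le> (\<Sum>k=1..K. (x k - x (Suc k)) * real (card {m\<in>Q. m \<le> k}))"
  proof (rule sum_mono)
    fix k assume k: "k \<in> {1..K}"
    have "min (real l) (real (hits g (h ` {1..k}))) \<le> real (card {m\<in>Q. m \<le> k})"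
      using Q_counts[of k] unfolding hits_eq[OF k] of_nat_min[symmetric] of_nat_le_iff .
    then show "(x k - x (Suc k)) * min (real l) (real (hits g (h ` {1..k})))
        \<le> (x k - x (Suc k)) * real (card {m\<in>Q. m \<le> k})"
      using x_decr[OF k] by (intro mult_left_mono) auto
  qed
  also have "\<dots> = (\<Sum>m\<in>Q. x m)"
    using sum_eq_sum_decrements_card[of Q K x] Q_sub x(2) by simp
  also have "\<dots> = (\<Sum>c\<in>h ` Q. case_prod a c)"
    using x(1) Q_sub inj_on_subset[OF h_inj Q_sub] by (simp add: sum.reindex subset_iff)
  also have "\<dots> \<le> S_top n l a g"
  proof (rule sum_graph_cells_le_S_top[OF assms(1) _ _ _ g_maps a_nonneg])
    show "h ` Q \<subseteq> {1..n} \<times> {1..N}" using h_cells Q_sub by blast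
    show "card (h ` Q) \<le> l" using Q(2) card_image_le[OF finite_subset[OF Q_sub]] le_trans by blast
    show "\<And>c. c \<in> h ` Q \<Longrightarrow> g (fst c) = snd c" using Q(1) by (auto simp: H_def)
  qed
  finally show ?thesis .
qed

locale pairwise_uniform =
  fixes n N :: nat and G :: "(nat \<Rightarrow> nat) set" and C :: real
  assumes maps: "G \<subseteq> {1..n} \<rightarrow>\<^sub>E {1..N}" and finite_G: "finite G"
    and unif: "\<And>i j. i \<in> {1..n} \<Longrightarrow> j \<in> {1..N} \<Longrightarrow> prob_G G (\<lambda>g. g i = j) = 1 / real N"
    and pair: "\<And>i1 j1 i2 j2. i1 \<in> {1..n} \<Longrightarrow> j1 \<in> {1..N} \<Longrightarrow> i2 \<in> {1..n} \<Longrightarrow> j2 \<in> {1..N}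
                 \<Longrightarrow> (i1, j1) \<noteq> (i2, j2)
                 \<Longrightarrow> prob_G G (\<lambda>g. g i1 = j1 \<and> g i2 = j2) \<le> C / (real N)^2"
begin

lemma expect_hits:
  assumes "E \<subseteq> {1..n} \<times> {1..N}"
  shows "expect_G G (\<lambda>g. real (hits g E)) = real (card E) / real N"
proof -
  have "finite E" using assms finite_subset by blast
  then have "expect_G G (\<lambda>g. real (hits g E)) = (\<Sum>c\<in>E. prob_G G (\<lambda>g. g (fst c) = snd c))"
    by (simp only: real_hits_eq_sum expect_G_sum expect_G_of_bool[OF finite_G])
  also have "\<dots> = (\<Sum>c\<in>E. 1 / real N)"
    using assms unif by (intro sum.cong) auto
  finally show ?thesis by simp
qed

lemma expect_hits_sq:
  assumes "E \<subseteq> {1..n} \<times> {1..N}" "C \<ge> 0"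
  shows "expect_G G (\<lambda>g. (real (hits g E))^2) \<le> real (card E) / real N + C * (real (card E) / real N)^2"
proof -
  let ?both = "\<lambda>c c' g. g (fst c) = snd c \<and> g (fst c') = snd c'"
  have fin: "finite E" using assms finite_subset by blast
  have "(real (hits g E))^2 = (\<Sum>c\<in>E. \<Sum>c'\<in>E. of_bool (?both c c' g))" for g
    unfolding real_hits_eq_sum[OF fin] power2_eq_square sum_product of_bool_conj ..
  then have "expect_G G (\<lambda>g. (real (hits g E))^2) = (\<Sum>c\<in>E. \<Sum>c'\<in>E. prob_G G (?both c c'))"
    by (simp only: expect_G_sum expect_G_of_bool[OF finite_G])
  also have "\<dots> \<le> (\<Sum>c\<in>E. \<Sum>c'\<in>E. (if c = c' then 1 / real N else 0) + C / (real N)^2)"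
  proof (intro sum_mono)
    fix c c' assume "c \<in> E" "c' \<in> E"
    then have cells: "fst c \<in> {1..n}" "snd c \<in> {1..N}" "fst c' \<in> {1..n}" "snd c' \<in> {1..N}"
      using assms(1) by auto
    show "prob_G G (?both c c') \<le> (if c = c' then 1 / real N else 0) + C / (real N)^2"
    proof (cases "c = c'")
      case True
      then show ?thesis using unif[OF cells(1,2)] assms(2) by simp
    next
      case False
      then have "(fst c, snd c) \<noteq> (fst c', snd c')" by simp
      then show ?thesis using pair[OF cells] False by simp
    qed
  qed
  also have "\<dots> = real (card E) / real N + C * (real (card E) / real N)^2"
    using fin by (simp add: sum.distrib power2_eq_square algebra_simps)
  finally show ?thesis .
qed

lemma expect_min_hits_ge:
  assumes "E \<subseteq> {1..n} \<times> {1..N}" "C \<ge> 1" "L \<ge> 1" "real (card E) / real N \<le> L"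
  shows "real (card E) / real N / (1 + C) \<le> expect_G G (\<lambda>g. min L (real (hits g E)))"
  using expect_G_min_ge[OF assms(3,2) _ assms(4) _ expect_hits[OF assms(1)]]
    expect_hits_sq[OF assms(1)] assms(2) by simp

lemma expect_S_top_ge:
  fixes a :: "nat \<Rightarrow> nat \<Rightarrow> real"
  assumes "C \<ge> 1" "l \<le> n"
    and a_nonneg: "\<And>i j. i \<in> {1..n} \<Longrightarrow> j \<in> {1..N} \<Longrightarrow> a i j \<ge> 0"
    and h_inj: "inj_on h {1..l*N}" and h_cells: "h ` {1..l*N} \<subseteq> {1..n} \<times> {1..N}"
    and h_mono: "\<And>j. 1 \<le> j \<Longrightarrow> j < l*N \<Longrightarrow> case_prod a (h (j+1)) \<le> case_prod a (h j)"
  shows "(\<Sum>m=1..l*N. case_prod a (h m)) / (real N * (1 + C)) \<le> expect_G G (S_top n l a)"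
proof -
  define K where "K = l * N"
  define x where "x m = (if m \<le> K then case_prod a (h m) else 0)" for m
  have x_decr: "x (Suc k) \<le> x k" if "k \<in> {1..K}" for k
  proof (cases "k < K")
    case True
    then show ?thesis using h_mono[of k] that by (simp add: x_def K_def)
  next
    case False
    then have "h k \<in> {1..n} \<times> {1..N}" using h_cells that by (auto simp: K_def)
    then show ?thesis using False a_nonneg by (auto simp: x_def case_prod_beta)
  qed
  let ?X = "\<lambda>k g. min (real l) (real (hits g (h ` {1..k})))"
  have moment_bound: "real k / real N / (1 + C) \<le> expect_G G (?X k)" if k: "k \<in> {1..K}" for k
  proof -
    have "{1..k} \<subseteq> {1..l*N}" using k by (auto simp: K_def)
    then have E_k: "h ` {1..k} \<subseteq> {1..n} \<times> {1..N}" "card (h ` {1..k}) = k"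
      using h_cells inj_on_subset[OF h_inj] by (blast, simp add: card_image)
    have "real k \<le> real l * real N"
      using k of_nat_le_iff[of k "l * N", where 'a = real] by (simp add: K_def)
    then have "real k / real N \<le> real l" by (simp add: divide_le_eq)
    moreover have "1 \<le> real l" using k by (cases l) (auto simp: K_def)
    ultimately show ?thesis using expect_min_hits_ge[OF E_k(1) assms(1)] unfolding E_k(2) by simp
  qed
  have "(\<Sum>m=1..K. case_prod a (h m)) = (\<Sum>m=1..K. x m)" by (simp add: x_def)
  also have "\<dots> = (\<Sum>k=1..K. (x k - x (Suc k)) * real k)"
    by (rule sum_eq_sum_decrements_mult) (simp add: x_def)
  finally have "(\<Sum>m=1..K. case_prod a (h m)) / (real N * (1 + C))
      = (\<Sum>k=1..K. (x k - x (Suc k)) * (real k / real N / (1 + C)))"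
    by (simp add: sum_divide_distrib)
  also have "\<dots> \<le> (\<Sum>k=1..K. (x k - x (Suc k)) * expect_G G (?X k))"
    using x_decr moment_bound by (intro sum_mono mult_left_mono) auto
  also have "\<dots> = expect_G G (\<lambda>g. \<Sum>k=1..K. (x k - x (Suc k)) * ?X k g)"
    by (simp only: expect_G_sum expect_G_cmult)
  also have "\<dots> \<le> expect_G G (S_top n l a)"
  proof (rule expect_G_mono, rule S_top_ge_sum_min_hits[OF assms(2)])
    fix g assume "g \<in> G"
    then show "\<And>i. i \<in> {1..n} \<Longrightarrow> g i \<in> {1..N}" using maps by (auto simp: PiE_iff)
  qed (use h_inj h_cells a_nonneg x_decr in \<open>auto simp: x_def K_def\<close>)
  finally show ?thesis by (simp add: K_def)
qed

end

lemma S_top_a_tilde_le: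
  assumes "l \<le> n" "\<And>m. m \<in> {1..l*N} \<Longrightarrow> case_prod a (h m) \<ge> 0"
  shows "S_top n l (a_tilde l N h a) g \<le> (\<Sum>m=1..l*N. case_prod a (h m)) / real N"
proof -
  define A where "A = (\<Sum>m=1..l*N. case_prod a (h m)) / real (l*N)"
  have "0 \<le> A" unfolding A_def using assms(2) by (intro divide_nonneg_nonneg sum_nonneg) auto
  then have "S_top n l (a_tilde l N h a) g \<le> real l * A"
    by (intro S_top_le[OF assms(1)]) (simp add: a_tilde_def A_def)
  also have "\<dots> = (\<Sum>m=1..l*N. case_prod a (h m)) / real N"
    by (cases "l = 0") (simp_all add: A_def)
  finally show ?thesis .
qed

theorem lemma3p5:
  fixes n N l :: nat and G :: "(nat \<Rightarrow> nat) set" and C_G :: real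
    and a :: "nat \<Rightarrow> nat \<Rightarrow> real" and h :: "nat \<Rightarrow> nat \<times> nat"
  assumes n_pos: "n \<ge> 1" and N_pos: "N \<ge> 1"
    and G_maps: "G \<subseteq> {1..n} \<rightarrow>\<^sub>E {1..N}"
    and G_fin: "finite G" and G_ne: "G \<noteq> {}"
    and C_G: "C_G \<ge> 1"
    and unif: "\<And>i j. i \<in> {1..n} \<Longrightarrow> j \<in> {1..N} \<Longrightarrow> prob_G G (\<lambda>g. g i = j) = 1 / real N"
    and pair: "\<And>i1 j1 i2 j2. i1 \<in> {1..n} \<Longrightarrow> j1 \<in> {1..N} \<Longrightarrow> i2 \<in> {1..n} \<Longrightarrow> j2 \<in> {1..N}
                 \<Longrightarrow> (i1, j1) \<noteq> (i2, j2)
                 \<Longrightarrow> prob_G G (\<lambda>g. g i1 = j1 \<and> g i2 = j2) \<le> C_G / (real N)^2"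
    and l: "1 \<le> l" "l \<le> n"
    and a_nonneg: "\<And>i j. i \<in> {1..n} \<Longrightarrow> j \<in> {1..N} \<Longrightarrow> a i j \<ge> 0"
    and h_bij: "bij_betw h {1..n*N} ({1..n} \<times> {1..N})"
    and h_mono: "\<And>j. 1 \<le> j \<Longrightarrow> j < l*N \<Longrightarrow> case_prod a (h j) \<ge> case_prod a (h (j+1))"
    and h_zero: "\<And>j. l*N < j \<Longrightarrow> j \<le> n*N \<Longrightarrow> case_prod a (h j) = 0"
  shows "expect_G G (S_top n l (a_tilde l N h a)) \<le> (8 + 16 * C_G) * expect_G G (S_top n l a)"
proof -
  interpret pairwise_uniform n N G C_G
    using G_maps G_fin unif pair by unfold_locales
  define T where "T = (\<Sum>m=1..l*N. case_prod a (h m))"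
  have top_positions: "{1..l*N} \<subseteq> {1..n*N}" using l by auto
  then have h_inj: "inj_on h {1..l*N}" using h_bij by (meson bij_betw_def inj_on_subset)
  have h_cells: "h ` {1..l*N} \<subseteq> {1..n} \<times> {1..N}"
    using h_bij top_positions by (metis bij_betw_def image_mono)
  have a_h_nonneg: "case_prod a (h m) \<ge> 0" if "m \<in> {1..l*N}" for m
  proof -
    have "h m \<in> {1..n} \<times> {1..N}" using that h_cells by blast
    then show ?thesis using a_nonneg by (auto simp: case_prod_beta mem_Times_iff)
  qed
  have "0 \<le> T" unfolding T_def by (rule sum_nonneg) (rule a_h_nonneg)
  have lower: "T / (real N * (1 + C_G)) \<le> expect_G G (S_top n l a)"
    unfolding T_def using expect_S_top_ge[OF C_G l(2) a_nonneg h_inj h_cells] h_mono by simp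
  have "expect_G G (S_top n l (a_tilde l N h a)) \<le> expect_G G (\<lambda>_. T / real N)"
    using S_top_a_tilde_le[OF l(2) a_h_nonneg] by (intro expect_G_mono) (simp add: T_def)
  also have "\<dots> = (1 + C_G) * (T / (real N * (1 + C_G)))"
    using G_fin G_ne C_G by (simp add: expect_G_const)
  also have "\<dots> \<le> (1 + C_G) * expect_G G (S_top n l a)"
    using lower C_G by (intro mult_left_mono) auto
  also have "\<dots> \<le> (8 + 16 * C_G) * expect_G G (S_top n l a)"
    using \<open>0 \<le> T\<close> lower C_G
    by (intro mult_right_mono) (auto intro: order_trans[rotated])
  finally show ?thesis .
qed

end
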